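(* Let $\mathcal X$ be a finite abelian group, $\mathcal Z$ a finite set, $P_{XZ}$ a distribution on $\mathcal X\times\mathcal Z$ and $W_{XZ|X}(x,z|x'):=P_{XZ}(x-x',z)$ the associated conditional additive channel. For any finite set $\mathcal M$ and distribution $P_M$ on $\mathcal M$: (1) for every $s\in(0,1)$, \[P_{js}(P_M,W_{XZ|X})\le\Big(\frac{e^{H_{1-s}(M)+H^{\downarrow}_{1-s}(X|Z)}}{|\mathcal X|}\Big)^{s};\] (2) for every $s\in(0,\tfrac12]$, \[P_{js}(P_M,W_{XZ|X})\le\Big(\frac{e^{H_{1-s}(M)+H^{\uparrow}_{1-s}(X|Z)}}{|\mathcal X|}\Big)^{\frac{s}{1-s}}.\]
   Context: A code $\phi=(\mathsf e,\mathsf d)$ consists of $\mathsf e:\mathcal M\to\mathcal X$ and $\mathsf d:\mathcal X\times\mathcal Z\to\mathcal M$; $P_{js}[\phi|P_M,W]:=\sum_m P_M(m)W(\{y:\mathsf d(y)\ne m\}|\mathsf e(m))$ and $P_{js}(P_M,W):=\inf_\phi P_{js}[\phi|P_M,W]$. $H_{1-s}(M):=\frac1s\log\sum_mP_M(m)^{1-s}$. For a distribution $Q_Z$ on $\mathcal Z$, $H_{1-s}(P_{XZ}|Q_Z):=\frac1s\log\sum_{x,z}P_{XZ}(x,z)^{1-s}Q_Z(z)^s$ (sum over the support of $P_{XZ}$). $H^{\downarrow}_{1-s}(X|Z):=H_{1-s}(P_{XZ}|P_Z)$ with $P_Z$ the marginal, and $H^{\uparrow}_{1-s}(X|Z):=H_{1-s}(P_{XZ}|P_Z^{(1-s)})$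 where $P_Z^{(1-s)}(z):=\big[\sum_xP_{XZ}(x,z)^{1-s}\big]^{\frac1{1-s}}\big/\sum_{z'}\big[\sum_xP_{XZ}(x,z')^{1-s}\big]^{\frac1{1-s}}$. *)

theory Defs
  imports Complex_Main
begin

definition is_dist :: "('a::finite \<Rightarrow> real) \<Rightarrow> bool" where
  "is_dist p \<longleftrightarrow> (\<forall>a. 0 \<le> p a) \<and> (\<Sum>a\<in>UNIV. p a) = 1"

text \<open>Conditional additive channel: W (x,z | x') = P_XZ (x - x', z).
  The channel is given as input letter \<Rightarrow> distribution on outputs.\<close>
definition cond_add_channel ::
  "('x::ab_group_add \<times> 'z \<Rightarrow> real) \<Rightarrow> 'x \<Rightarrow> ('x \<times> 'z \<Rightarrow> real)" where
  "cond_add_channel P x' = (\<lambda>(x, z). P (x - x', z))"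

definition err_prob ::
  "('m::finite \<Rightarrow> real) \<Rightarrow> ('x \<Rightarrow> 'y::finite \<Rightarrow> real) \<Rightarrow> ('m \<Rightarrow> 'x) \<Rightarrow> ('y \<Rightarrow> 'm) \<Rightarrow> real" where
  "err_prob PM W e d = (\<Sum>m\<in>UNIV. PM m * (\<Sum>y\<in>{y. d y \<noteq> m}. W (e m) y))"

definition Pjs ::
  "('m::finite \<Rightarrow> real) \<Rightarrow> ('x::finite \<Rightarrow> 'y::finite \<Rightarrow> real) \<Rightarrow> real" where
  "Pjs PM W = Inf ((\<lambda>(e, d). err_prob PM W e d) ` (UNIV :: (('m \<Rightarrow> 'x) \<times> ('y \<Rightarrow> 'm)) set))"

text \<open>Renyi entropy H_{1-s}(M) (natural logarithm).\<close>
definition renyi_ent :: "real \<Rightarrow> ('m::finite \<Rightarrow> real) \<Rightarrow> real" where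
  "renyi_ent s PM = (1 / s) * ln (\<Sum>m\<in>UNIV. PM m powr (1 - s))"

text \<open>H_{1-s}(P_XZ | Q_Z), sum over the support of P_XZ.\<close>
definition cond_renyi :: "real \<Rightarrow> ('x::finite \<times> 'z::finite \<Rightarrow> real) \<Rightarrow> ('z \<Rightarrow> real) \<Rightarrow> real" where
  "cond_renyi s P Q = (1 / s) * ln (\<Sum>p\<in>{p. P p \<noteq> 0}. P p powr (1 - s) * Q (snd p) powr s)"

definition marg_Z :: "('x::finite \<times> 'z \<Rightarrow> real) \<Rightarrow> 'z \<Rightarrow> real" where
  "marg_Z P z = (\<Sum>x\<in>UNIV. P (x, z))"

definition tilted_Z :: "real \<Rightarrow> ('x::finite \<times> 'z::finite \<Rightarrow> real) \<Rightarrow> 'z \<Rightarrow> real" where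
  "tilted_Z s P z = (\<Sum>x\<in>UNIV. P (x, z) powr (1 - s)) powr (1 / (1 - s)) /
      (\<Sum>z'\<in>UNIV. (\<Sum>x\<in>UNIV. P (x, z') powr (1 - s)) powr (1 / (1 - s)))"

definition H_down :: "real \<Rightarrow> ('x::finite \<times> 'z::finite \<Rightarrow> real) \<Rightarrow> real" where
  "H_down s P = cond_renyi s P (marg_Z P)"

definition H_up :: "real \<Rightarrow> ('x::finite \<times> 'z::finite \<Rightarrow> real) \<Rightarrow> real" where
  "H_up s P = cond_renyi s P (tilted_Z s P)"

end

theory Submission
  imports Defs "HOL-Analysis.Convex" "HOL-Library.FuncSet" "HOL-Library.Cardinality"
begin

text \<open>Gallager's random-coding argument. Draw the encoder \<open>e\<close> uniformly among all maps from
  messages to inputs and decode by maximum a posteriori probability. An error for message \<open>m\<close>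
  at output \<open>y\<close> means that some competitor \<open>m'\<close> is at least as likely, so the error indicator is
  at most the \<open>\<rho>\<close>-th power of \<open>\<Sum>m'\<noteq>m. (P(m') W(y|e m'))^u / (P(m) W(y|e m))^u\<close>. Codewords
  of distinct messages are independent and uniform, so averaging over \<open>e\<close> with \<open>e m\<close> fixed and
  using concavity of \<open>t^\<rho>\<close> for \<open>\<rho> \<le> 1\<close> gives a Gallager-type bound. For a conditional additive
  channel this bound factorises by translation invariance, and the choices \<open>(u, \<rho>) = (1, s)\<close> and
  \<open>(1 - s, s/(1 - s))\<close> turn it into the two Renyi expressions.\<close>

lemma sum_powr_le_card_mean_powr:
  fixes f :: "'a \<Rightarrow> real"
  assumes S: "finite S" "S \<noteq> {}" and f: "\<And>i. i \<in> S \<Longrightarrow> 0 \<le> f i"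
    and \<rho>: "0 < \<rho>" "\<rho> \<le> 1"
  shows "(\<Sum>i\<in>S. f i powr \<rho>) \<le> card S * ((\<Sum>i\<in>S. f i) / card S) powr \<rho>"
proof -
  define l where "l = (\<Sum>i\<in>S. f i) / card S"
  have card_pos: "0 < real (card S)" using S by auto
  have "0 \<le> l" unfolding l_def using f by (simp add: sum_nonneg)
  show ?thesis
  proof (cases "l = 0")
    case True
    then have "\<forall>i\<in>S. f i = 0"
      using card_pos f sum_nonneg_eq_0_iff[OF S(1)] unfolding l_def by auto
    then show ?thesis by simp
  next
    case False
    with \<open>0 \<le> l\<close> have "0 < l" by simp
    \<comment> \<open>concavity of \<open>t powr \<rho>\<close>: it lies below its tangent at \<open>l\<close>\<close>
    have tangent: "f i powr \<rho> \<le> l powr \<rho> * (\<rho> * (f i / l) + (1 - \<rho>))" if "i \<in> S" for i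
    proof (cases "f i = 0")
      case False
      with f[OF that] \<open>0 < l\<close> \<rho>
      have "(f i / l) powr \<rho> * 1 powr (1 - \<rho>) \<le> \<rho> * (f i / l) + (1 - \<rho>) * 1"
        by (intro Youngs_inequality_0) auto
      then show ?thesis
        using f[OF that] \<open>0 < l\<close> by (simp add: powr_divide divide_le_eq mult.commute)
    qed (use \<rho> in simp)
    have "(\<Sum>i\<in>S. f i powr \<rho>) \<le> (\<Sum>i\<in>S. l powr \<rho> * (\<rho> * (f i / l) + (1 - \<rho>)))"
      using tangent by (rule sum_mono)
    also have "\<dots> = (\<Sum>i\<in>S. (l powr \<rho> * \<rho> / l) * f i + l powr \<rho> * (1 - \<rho>))"
      by (rule sum.cong) (auto simp: algebra_simps)
    also have "\<dots> = (l powr \<rho> * \<rho> / l) * (\<Sum>i\<in>S. f i) + card S * (l powr \<rho> * (1 - \<rho>))"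
      by (simp add: sum.distrib sum_distrib_left)
    also have "\<dots> = l powr \<rho> * (\<rho> / l * (\<Sum>i\<in>S. f i) + card S * (1 - \<rho>))"
      by (simp add: algebra_simps)
    also have "\<dots> = card S * l powr \<rho>"
      using card_pos \<open>0 < l\<close> unfolding l_def by (simp add: field_simps)
    finally show ?thesis unfolding l_def .
  qed
qed

lemma card_funs_fixed_on:
  "card {f :: 'a::finite \<Rightarrow> 'b::finite. \<forall>i\<in>I. f i = g i} = CARD('b) ^ card (- I)"
proof -
  have "{f :: 'a \<Rightarrow> 'b. \<forall>i\<in>I. f i = g i} = (\<Pi>\<^sub>E i\<in>UNIV. if i \<in> I then {g i} else UNIV)"
    by (auto simp: PiE_UNIV_domain Pi_iff split: if_splits)
  also have "card \<dots> = (\<Prod>i\<in>UNIV. if i \<in> I then 1 else CARD('b))"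
    by (auto simp: card_PiE intro!: prod.cong)
  also have "\<dots> = CARD('b) ^ card (- I)"
    by (simp add: prod.If_cases Compl_eq)
  finally show ?thesis .
qed

lemma card_funs_fixing_point:
  "CARD('b) * card {f :: 'a::finite \<Rightarrow> 'b::finite. f a = b} = CARD('a \<Rightarrow> 'b)"
proof -
  have "card (- {a}) + 1 = CARD('a)"
    using card.remove[of "UNIV :: 'a set" a] by (simp add: Compl_eq_Diff_UNIV)
  then show ?thesis
    using card_funs_fixed_on[of "{}" "undefined :: 'a \<Rightarrow> 'b"] card_funs_fixed_on[of "{a}" "\<lambda>_. b"]
    by (simp flip: power_Suc)
qed

lemma sum_funs_fixing_point_other:
  fixes h :: "'b::finite \<Rightarrow> real"
  assumes "a' \<noteq> a"
  shows "CARD('b) * (\<Sum>f \<in> {f :: 'a::finite \<Rightarrow> 'b. f a = b}. h (f a'))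
       = card {f :: 'a \<Rightarrow> 'b. f a = b} * (\<Sum>b'\<in>UNIV. h b')"
proof -
  define K where "K = CARD('b) ^ card (- {a, a'})"
  have fibre: "card {f :: 'a \<Rightarrow> 'b. f a = b \<and> f a' = b'} = K" for b'
  proof -
    have "{f :: 'a \<Rightarrow> 'b. f a = b \<and> f a' = b'} = {f. \<forall>i\<in>{a, a'}. f i = ((\<lambda>_. b)(a' := b')) i}"
      using assms by auto
    then show ?thesis unfolding K_def by (simp only: card_funs_fixed_on)
  qed
  have "- {a} = insert a' (- {a, a'})" using assms by auto
  then have "card {f :: 'a \<Rightarrow> 'b. f a = b} = CARD('b) * K"
    using card_funs_fixed_on[of "{a}" "\<lambda>_. b"] unfolding K_def by simp
  moreover have "(\<Sum>f \<in> {f :: 'a \<Rightarrow> 'b. f a = b}. h (f a')) = K * (\<Sum>b'\<in>UNIV. h b')"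
  proof -
    have "(\<Sum>f \<in> {f :: 'a \<Rightarrow> 'b. f a = b}. h (f a'))
        = (\<Sum>b'\<in>UNIV. \<Sum>f \<in> {f \<in> {f :: 'a \<Rightarrow> 'b. f a = b}. f a' = b'}. h (f a'))"
      by (rule sum.group[symmetric]) auto
    also have "\<dots> = (\<Sum>b'\<in>UNIV. K * h b')"
      by (intro sum.cong refl) (simp add: fibre)
    finally show ?thesis by (simp add: sum_distrib_left)
  qed
  ultimately show ?thesis by simp
qed

definition map_decoder :: "('m::finite \<Rightarrow> real) \<Rightarrow> ('x \<Rightarrow> 'y \<Rightarrow> real) \<Rightarrow> ('m \<Rightarrow> 'x) \<Rightarrow> 'y \<Rightarrow> 'm" where
  "map_decoder PM W e y = (ARG_MAX (\<lambda>m. PM m * W (e m) y) m. True)"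

lemma map_decoder_max:
  fixes PM :: "'m::finite \<Rightarrow> real"
  shows "PM m * W (e m) y \<le> PM (map_decoder PM W e y) * W (e (map_decoder PM W e y)) y"
proof -
  let ?f = "\<lambda>m. PM m * W (e m) y"
  have "Max (range ?f) \<in> range ?f" by (rule Max_in) auto
  then obtain k where k: "?f k = Max (range ?f)" by (rule rangeE) (rule that, simp)
  have max: "?f m' \<le> ?f k" for m'
    unfolding k by (rule Max_ge) auto
  have "?f (map_decoder PM W e y) = ?f k"
    unfolding map_decoder_def by (rule arg_max_equality) (simp_all add: max)
  with max show ?thesis by simp
qed

lemma Pjs_le_err_prob:
  fixes PM :: "'m::finite \<Rightarrow> real" and W :: "'x::finite \<Rightarrow> 'y::finite \<Rightarrow> real"
  shows "Pjs PM W \<le> err_prob PM W e d"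
  unfolding Pjs_def by (rule cInf_lower) (auto intro: bdd_below_finite)

lemma err_prob_map_decoder_le:
  fixes PM :: "'m::finite \<Rightarrow> real" and W :: "'x \<Rightarrow> 'y::finite \<Rightarrow> real"
  assumes PM: "\<And>m. 0 \<le> PM m" and W: "\<And>x y. 0 \<le> W x y" and "0 < u" "0 < \<rho>"
  shows "err_prob PM W e (map_decoder PM W e)
     \<le> (\<Sum>m\<in>UNIV. PM m * (\<Sum>y\<in>UNIV. W (e m) y *
          ((\<Sum>m'\<in>-{m}. (PM m' * W (e m') y) powr u) / (PM m * W (e m) y) powr u) powr \<rho>))"
proof -
  let ?d = "map_decoder PM W e"
  let ?r = "\<lambda>m y. ((\<Sum>m'\<in>-{m}. (PM m' * W (e m') y) powr u) / (PM m * W (e m) y) powr u) powr \<rho>"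
  \<comment> \<open>a decoding error means some competing message is at least as likely, so the ratio is \<open>\<ge> 1\<close>\<close>
  have error_le: "PM m * W (e m) y \<le> PM m * (W (e m) y * ?r m y)" if "?d y \<noteq> m" for m y
  proof (cases "PM m * W (e m) y = 0")
    case False
    then have pos: "0 < PM m * W (e m) y" using PM W by (simp add: less_le)
    have "(PM m * W (e m) y) powr u \<le> (PM (?d y) * W (e (?d y)) y) powr u"
      using map_decoder_max[of PM m W e y] pos \<open>0 < u\<close> by (intro powr_mono2) auto
    also have "\<dots> \<le> (\<Sum>m'\<in>-{m}. (PM m' * W (e m') y) powr u)"
      using that by (intro member_le_sum) auto
    finally have "1 \<le> (\<Sum>m'\<in>-{m}. (PM m' * W (e m') y) powr u) / (PM m * W (e m) y) powr u"
      using pos False by (simp add: le_divide_eq_1)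
    then have "1 \<le> ?r m y"
      using \<open>0 < \<rho>\<close> by (intro ge_one_powr_ge_zero) auto
    then have "PM m * (W (e m) y * 1) \<le> PM m * (W (e m) y * ?r m y)"
      using PM W by (intro mult_left_mono) auto
    then show ?thesis by simp
  qed (use PM W in auto)
  have "err_prob PM W e ?d = (\<Sum>m\<in>UNIV. \<Sum>y\<in>{y. ?d y \<noteq> m}. PM m * W (e m) y)"
    unfolding err_prob_def by (simp add: sum_distrib_left)
  also have "\<dots> \<le> (\<Sum>m\<in>UNIV. \<Sum>y\<in>{y. ?d y \<noteq> m}. PM m * (W (e m) y * ?r m y))"
    by (intro sum_mono error_le) simp
  also have "\<dots> \<le> (\<Sum>m\<in>UNIV. \<Sum>y\<in>UNIV. PM m * (W (e m) y * ?r m y))"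
    using PM W by (intro sum_mono sum_mono2) simp_all
  finally show ?thesis by (simp only: sum_distrib_left)
qed

lemma sum_random_encoders_le:
  fixes w a :: "'x::finite \<Rightarrow> real" and c :: "'m::finite \<Rightarrow> 'x \<Rightarrow> real"
  assumes w: "\<And>x. 0 \<le> w x" and a: "\<And>x. 0 \<le> a x" and c: "\<And>m x. 0 \<le> c m x"
    and \<rho>: "0 < \<rho>" "\<rho> \<le> 1"
  shows "(\<Sum>e\<in>UNIV. w (e m) * ((\<Sum>m'\<in>-{m}. c m' (e m')) / a (e m)) powr \<rho>)
       \<le> CARD('m \<Rightarrow> 'x) / CARD('x) * (\<Sum>x\<in>UNIV. w x * ((\<Sum>m'\<in>UNIV. \<Sum>x'\<in>UNIV. c m' x') / CARD('x) / a x) powr \<rho>)"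
proof -
  define N where "N = real CARD('x)"
  define F where "F x = {e :: 'm \<Rightarrow> 'x. e m = x}" for x
  define G where "G e = (\<Sum>m'\<in>-{m}. c m' (e m'))" for e :: "'m \<Rightarrow> 'x"
  define L where "L = (\<Sum>m'\<in>UNIV. \<Sum>x'\<in>UNIV. c m' x') / N"
  have "0 < N" unfolding N_def by simp
  have card_F: "real (card (F x)) = CARD('m \<Rightarrow> 'x) / N" for x
    using card_funs_fixing_point[of m x] \<open>0 < N\<close> unfolding F_def N_def
    by (simp add: field_simps flip: of_nat_mult)
  have G: "0 \<le> G e" for e unfolding G_def using c by (simp add: sum_nonneg)
  \<comment> \<open>the codewords of the other messages are uniform on each fibre \<open>F x\<close>\<close>
  have mean_G: "(\<Sum>e\<in>F x. G e) / card (F x) \<le> L" for x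
  proof -
    have "(\<Sum>e\<in>F x. c m' (e m')) = card (F x) / N * (\<Sum>x'\<in>UNIV. c m' x')" if "m' \<noteq> m" for m'
      using sum_funs_fixing_point_other[OF that, of "c m'" x] \<open>0 < N\<close>
      unfolding F_def N_def by (simp add: field_simps)
    then have "(\<Sum>e\<in>F x. G e) = card (F x) * ((\<Sum>m'\<in>-{m}. \<Sum>x'\<in>UNIV. c m' x') / N)"
      unfolding G_def by (subst sum.swap) (simp add: sum_distrib_left sum_divide_distrib)
    moreover have "0 < card (F x)" unfolding F_def by (auto simp: card_gt_0_iff)
    ultimately have "(\<Sum>e\<in>F x. G e) / card (F x) = (\<Sum>m'\<in>-{m}. \<Sum>x'\<in>UNIV. c m' x') / N"
      by (auto simp: card_gt_0_iff)
    also have "\<dots> \<le> L"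
      unfolding L_def using \<open>0 < N\<close> c by (intro divide_right_mono sum_mono2) (auto simp: sum_nonneg)
    finally show ?thesis .
  qed
  have fibre: "(\<Sum>e\<in>F x. (G e / a x) powr \<rho>) \<le> card (F x) * (L / a x) powr \<rho>" for x
  proof -
    have "(\<Sum>e\<in>F x. (G e / a x) powr \<rho>) = (\<Sum>e\<in>F x. G e powr \<rho>) / a x powr \<rho>"
      using G a by (simp add: powr_divide sum_divide_distrib)
    also have "\<dots> \<le> card (F x) * ((\<Sum>e\<in>F x. G e) / card (F x)) powr \<rho> / a x powr \<rho>"
      using G \<rho> unfolding F_def by (intro divide_right_mono sum_powr_le_card_mean_powr) auto
    also have "\<dots> \<le> card (F x) * L powr \<rho> / a x powr \<rho>"
      using mean_G G \<rho> by (intro divide_right_mono mult_left_mono powr_mono2) (auto simp: sum_nonneg)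
    finally show ?thesis
      using a \<open>0 < N\<close> c unfolding L_def by (simp add: powr_divide powr_mult sum_nonneg)
  qed
  have "(\<Sum>e\<in>UNIV. w (e m) * (G e / a (e m)) powr \<rho>)
      = (\<Sum>x\<in>UNIV. \<Sum>e\<in>{e. e \<in> UNIV \<and> e m = x}. w (e m) * (G e / a (e m)) powr \<rho>)"
    by (rule sum.group[symmetric]) auto
  also have "\<dots> = (\<Sum>x\<in>UNIV. w x * (\<Sum>e\<in>F x. (G e / a x) powr \<rho>))"
    unfolding F_def by (simp add: sum_distrib_left)
  also have "\<dots> \<le> (\<Sum>x\<in>UNIV. w x * (card (F x) * (L / a x) powr \<rho>))"
    using w fibre by (intro sum_mono mult_left_mono) auto
  also have "\<dots> = (\<Sum>x\<in>UNIV. CARD('m \<Rightarrow> 'x) / N * (w x * (L / a x) powr \<rho>))"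
    by (simp only: card_F mult.left_commute)
  also have "\<dots> = CARD('m \<Rightarrow> 'x) / N * (\<Sum>x\<in>UNIV. w x * (L / a x) powr \<rho>)"
    by (rule sum_distrib_left[symmetric])
  finally show ?thesis unfolding G_def L_def N_def .
qed

lemma Pjs_le_random_coding:
  fixes PM :: "'m::finite \<Rightarrow> real" and W :: "'x::finite \<Rightarrow> 'y::finite \<Rightarrow> real"
  assumes PM: "\<And>m. 0 \<le> PM m" and W: "\<And>x y. 0 \<le> W x y" and "0 < u" and \<rho>: "0 < \<rho>" "\<rho> \<le> 1"
  shows "Pjs PM W \<le> (\<Sum>m\<in>UNIV. PM m * (\<Sum>y\<in>UNIV. \<Sum>x\<in>UNIV. W x y *
            ((\<Sum>m'\<in>UNIV. \<Sum>x'\<in>UNIV. (PM m' * W x' y) powr u) / CARD('x) / (PM m * W x y) powr u) powr \<rho>))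
          / CARD('x)"
proof -
  define C where "C = real CARD('m \<Rightarrow> 'x)"
  define T where "T m y e = W (e m) y * ((\<Sum>m'\<in>-{m}. (PM m' * W (e m') y) powr u) / (PM m * W (e m) y) powr u) powr \<rho>"
    for m y and e :: "'m \<Rightarrow> 'x"
  define B where "B m y = (\<Sum>x\<in>UNIV. W x y *
            ((\<Sum>m'\<in>UNIV. \<Sum>x'\<in>UNIV. (PM m' * W x' y) powr u) / CARD('x) / (PM m * W x y) powr u) powr \<rho>)" for m y
  have "0 < C" unfolding C_def by simp
  have "C * Pjs PM W = (\<Sum>e \<in> (UNIV :: ('m \<Rightarrow> 'x) set). Pjs PM W)"
    unfolding C_def by simp
  also have "\<dots> \<le> (\<Sum>e\<in>UNIV. err_prob PM W e (map_decoder PM W e))"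
    by (intro sum_mono Pjs_le_err_prob)
  also have "\<dots> \<le> (\<Sum>e\<in>UNIV. \<Sum>m\<in>UNIV. PM m * (\<Sum>y\<in>UNIV. T m y e))"
    unfolding T_def using PM W \<open>0 < u\<close> \<rho> by (intro sum_mono err_prob_map_decoder_le) auto
  also have "\<dots> = (\<Sum>m\<in>UNIV. PM m * (\<Sum>y\<in>UNIV. \<Sum>e\<in>UNIV. T m y e))"
    by (subst sum.swap) (simp add: sum_distrib_left sum.swap[of _ "UNIV :: ('m \<Rightarrow> 'x) set"])
  also have "\<dots> \<le> (\<Sum>m\<in>UNIV. PM m * (\<Sum>y\<in>UNIV. C / CARD('x) * B m y))"
    unfolding T_def B_def C_def using PM W \<rho>
    by (intro sum_mono mult_left_mono sum_random_encoders_le) auto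
  also have "\<dots> = C * ((\<Sum>m\<in>UNIV. PM m * (\<Sum>y\<in>UNIV. B m y)) / CARD('x))"
    by (simp add: sum_distrib_left sum_divide_distrib mult_ac)
  finally have "Pjs PM W \<le> (\<Sum>m\<in>UNIV. PM m * (\<Sum>y\<in>UNIV. B m y)) / CARD('x)"
    using \<open>0 < C\<close> by (simp only: mult_le_cancel_left_pos)
  then show ?thesis unfolding B_def .
qed

lemma sum_UNIV_diff_left:
  fixes f :: "'x::{finite, ab_group_add} \<Rightarrow> 'a::comm_monoid_add"
  shows "(\<Sum>x\<in>UNIV. f (c - x)) = (\<Sum>x\<in>UNIV. f x)"
  by (rule sum.reindex_bij_witness[where i = "\<lambda>x. c - x" and j = "\<lambda>x. c - x"]) auto

lemma sum_UNIV_prod_snd: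
  fixes f :: "'z::finite \<Rightarrow> 'a::comm_semiring_1"
  shows "(\<Sum>y \<in> (UNIV :: ('x::finite \<times> 'z) set). f (snd y)) = of_nat CARD('x) * (\<Sum>z\<in>UNIV. f z)"
  unfolding UNIV_Times_UNIV[symmetric] sum.cartesian_product' by simp

lemma mult_ratio_powr_eq:
  fixes a b l u \<rho> :: real
  assumes "0 \<le> a" "0 \<le> b" "0 \<le> l"
  shows "a * (b * (l / (a * b) powr u) powr \<rho>) = a powr (1 - u * \<rho>) * b powr (1 - u * \<rho>) * l powr \<rho>"
proof (cases "a = 0 \<or> b = 0")
  case False
  with assms have "0 < a" "0 < b" by auto
  then show ?thesis
    using assms by (simp add: powr_divide powr_powr powr_mult powr_diff)
qed auto

lemma Pjs_cond_add_channel_le: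
  fixes P :: "'x::{finite, ab_group_add} \<times> 'z::finite \<Rightarrow> real" and PM :: "'m::finite \<Rightarrow> real"
  assumes P: "\<And>p. 0 \<le> P p" and PM: "\<And>m. 0 \<le> PM m" and "0 < u" and \<rho>: "0 < \<rho>" "\<rho> \<le> 1"
  shows "Pjs PM (cond_add_channel P) \<le> (\<Sum>m\<in>UNIV. PM m powr (1 - u * \<rho>)) * (\<Sum>m\<in>UNIV. PM m powr u) powr \<rho>
     * (\<Sum>z\<in>UNIV. \<Sum>x\<in>UNIV. P (x, z) powr (1 - u * \<rho>) * (\<Sum>x'\<in>UNIV. P (x', z) powr u) powr \<rho>)
     / CARD('x) powr \<rho>"
proof -
  define W where "W = cond_add_channel P"
  define N where "N = real CARD('x)"
  define t where "t = 1 - u * \<rho>"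
  define R where "R = (\<Sum>m\<in>UNIV. PM m powr u)"
  define A where "A z = (\<Sum>x\<in>UNIV. P (x, z) powr u)" for z
  define D where "D m z = PM m powr t * (R * A z / N) powr \<rho> * (\<Sum>x\<in>UNIV. P (x, z) powr t)" for m z
  have "0 < N" unfolding N_def by simp
  have W_eq: "W x (y, z) = P (y - x, z)" for x y z
    unfolding W_def cond_add_channel_def by simp
  have W: "0 \<le> W x y" for x y
    using P unfolding W_def cond_add_channel_def by (simp add: case_prod_beta)
  have "0 \<le> R" "0 \<le> A z" for z
    unfolding R_def A_def by (simp_all add: sum_nonneg)
  \<comment> \<open>by translation invariance the competing mass does not depend on the first output component\<close>
  have competitors: "(\<Sum>m'\<in>UNIV. \<Sum>x'\<in>UNIV. (PM m' * W x' (y, z)) powr u) = R * A z" for y z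
  proof -
    have "(\<Sum>m'\<in>UNIV. \<Sum>x'\<in>UNIV. (PM m' * W x' (y, z)) powr u)
        = (\<Sum>m'\<in>UNIV. PM m' powr u * (\<Sum>x'\<in>UNIV. P (y - x', z) powr u))"
      using PM P by (simp add: W_eq powr_mult sum_distrib_left)
    also have "\<dots> = R * A z"
      unfolding A_def R_def sum_UNIV_diff_left[of "\<lambda>x. P (x, z) powr u" y]
      by (simp add: sum_distrib_right)
    finally show ?thesis .
  qed
  define S where "S m y = (\<Sum>x\<in>UNIV. W x y *
      ((\<Sum>m'\<in>UNIV. \<Sum>x'\<in>UNIV. (PM m' * W x' y) powr u) / N / (PM m * W x y) powr u) powr \<rho>)" for m y
  have per_output: "PM m * S m y = D m (snd y)" for m y
  proof -
    obtain y1 z where y: "y = (y1, z)" by (cases y)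
    have "PM m * S m y = (\<Sum>x\<in>UNIV. PM m * (P (y1 - x, z) * (R * A z / N / (PM m * P (y1 - x, z)) powr u) powr \<rho>))"
      unfolding S_def y competitors by (simp add: W_eq sum_distrib_left)
    also have "\<dots> = (\<Sum>x\<in>UNIV. PM m powr t * P (y1 - x, z) powr t * (R * A z / N) powr \<rho>)"
      unfolding t_def using PM P \<open>0 \<le> R\<close> \<open>0 \<le> A z\<close> \<open>0 < N\<close>
      by (intro sum.cong refl mult_ratio_powr_eq) auto
    also have "\<dots> = D m (snd y)"
      unfolding D_def y sum_UNIV_diff_left[of "\<lambda>x. PM m powr t * P (x, z) powr t * (R * A z / N) powr \<rho>"]
      by (simp add: sum_distrib_left sum_distrib_right mult_ac)
    finally show ?thesis .
  qed
  have "Pjs PM W \<le> (\<Sum>m\<in>UNIV. PM m * (\<Sum>y\<in>UNIV. S m y)) / N"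
    unfolding S_def N_def using PM W \<open>0 < u\<close> \<rho> by (rule Pjs_le_random_coding)
  also have "\<dots> = (\<Sum>m\<in>UNIV. \<Sum>y \<in> (UNIV :: ('x \<times> 'z) set). D m (snd y)) / N"
    by (simp only: sum_distrib_left per_output)
  also have "\<dots> = (\<Sum>m\<in>UNIV. \<Sum>z\<in>UNIV. D m z)"
    using \<open>0 < N\<close> unfolding N_def sum_UNIV_prod_snd sum_distrib_left[symmetric] by simp
  also have "\<dots> = (\<Sum>m\<in>UNIV. PM m powr t) * (R powr \<rho> / N powr \<rho>
      * (\<Sum>z\<in>UNIV. \<Sum>x\<in>UNIV. P (x, z) powr t * A z powr \<rho>))"
  proof -
    have "D m z = PM m powr t * (R powr \<rho> / N powr \<rho> * (\<Sum>x\<in>UNIV. P (x, z) powr t * A z powr \<rho>))" for m z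
      unfolding D_def using \<open>0 \<le> R\<close> \<open>0 \<le> A z\<close> \<open>0 < N\<close>
      by (simp add: powr_mult powr_divide sum_distrib_left sum_distrib_right sum_divide_distrib mult_ac)
    then show ?thesis
      by (simp only: sum_distrib_left[symmetric] sum_distrib_right[symmetric])
  qed
  finally show ?thesis
    unfolding W_def t_def R_def A_def N_def by (simp add: mult_ac)
qed

lemma is_dist_nonneg: "is_dist p \<Longrightarrow> 0 \<le> p a"
  unfolding is_dist_def by simp

lemma is_dist_sum: "is_dist p \<Longrightarrow> (\<Sum>a\<in>UNIV. p a) = 1"
  unfolding is_dist_def by simp

lemma is_dist_ex_pos:
  assumes "is_dist p"
  obtains a where "0 < p a"
proof -
  have "\<exists>a. p a \<noteq> 0"
  proof (rule ccontr)
    assume "\<not> (\<exists>a. p a \<noteq> 0)"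
    then have "(\<Sum>a\<in>UNIV. p a) = 0" by simp
    with is_dist_sum[OF assms] show False by simp
  qed
  with is_dist_nonneg[OF assms] show ?thesis using that by (auto simp: less_le)
qed

lemma is_dist_sum_powr_pos:
  assumes "is_dist p"
  shows "0 < (\<Sum>a\<in>UNIV. p a powr t)"
proof -
  obtain a where "0 < p a" using assms by (rule is_dist_ex_pos)
  then have "0 < p a powr t" by simp
  also have "\<dots> \<le> (\<Sum>a\<in>UNIV. p a powr t)" by (rule member_le_sum) auto
  finally show ?thesis .
qed

lemma sum_support_powr_eq:
  fixes P :: "'x::finite \<times> 'z::finite \<Rightarrow> real"
  assumes "0 < t"
  shows "(\<Sum>p\<in>{p. P p \<noteq> 0}. P p powr t * g (snd p)) = (\<Sum>z\<in>UNIV. \<Sum>x\<in>UNIV. P (x, z) powr t * g z)"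
proof -
  have "(\<Sum>p\<in>{p. P p \<noteq> 0}. P p powr t * g (snd p)) = (\<Sum>p\<in>UNIV. P p powr t * g (snd p))"
    by (rule sum.mono_neutral_left) auto
  also have "\<dots> = (\<Sum>x\<in>UNIV. \<Sum>z\<in>UNIV. P (x, z) powr t * g z)"
    unfolding UNIV_Times_UNIV[symmetric] sum.cartesian_product' by simp
  also have "\<dots> = (\<Sum>z\<in>UNIV. \<Sum>x\<in>UNIV. P (x, z) powr t * g z)"
    by (rule sum.swap)
  finally show ?thesis .
qed

lemma exp_mult_renyi_ent:
  assumes "is_dist PM" and "0 < s"
  shows "exp (s * renyi_ent s PM) = (\<Sum>m\<in>UNIV. PM m powr (1 - s))"
  using is_dist_sum_powr_pos[OF assms(1)] assms(2) unfolding renyi_ent_def by simp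

lemma exp_mult_H_down:
  assumes P: "is_dist P" and s: "0 < s" "s < 1"
  shows "exp (s * H_down s P) = (\<Sum>z\<in>UNIV. \<Sum>x\<in>UNIV. P (x, z) powr (1 - s) * marg_Z P z powr s)"
    (is "_ = ?Q")
proof -
  obtain x0 z0 where pos: "0 < P (x0, z0)" using P by (metis is_dist_ex_pos surj_pair)
  have "P (x0, z0) \<le> marg_Z P z0"
    unfolding marg_Z_def using is_dist_nonneg[OF P] by (intro member_le_sum) auto
  with pos have "0 < P (x0, z0) powr (1 - s) * marg_Z P z0 powr s" by simp
  also have "\<dots> \<le> (\<Sum>x\<in>UNIV. P (x, z0) powr (1 - s) * marg_Z P z0 powr s)"
    by (rule member_le_sum) auto
  also have "\<dots> \<le> ?Q"
    by (rule member_le_sum) (auto intro: sum_nonneg)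
  finally have "0 < ?Q" .
  moreover have "(\<Sum>p\<in>{p. P p \<noteq> 0}. P p powr (1 - s) * marg_Z P (snd p) powr s) = ?Q"
    using s by (intro sum_support_powr_eq) simp
  ultimately show ?thesis
    unfolding H_down_def cond_renyi_def using s by simp
qed

lemma exp_mult_H_up:
  assumes P: "is_dist P" and s: "0 < s" "s < 1"
  shows "exp (s * H_up s P) = (\<Sum>z\<in>UNIV. (\<Sum>x\<in>UNIV. P (x, z) powr (1 - s)) powr (1 / (1 - s))) powr (1 - s)"
proof -
  define A where "A z = (\<Sum>x\<in>UNIV. P (x, z) powr (1 - s))" for z
  define S where "S = (\<Sum>z\<in>UNIV. A z powr (1 / (1 - s)))"
  have A: "0 \<le> A z" for z unfolding A_def by (simp add: sum_nonneg)
  obtain x0 z0 where pos: "0 < P (x0, z0)" using P by (metis is_dist_ex_pos surj_pair)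
  have "0 < P (x0, z0) powr (1 - s)" using pos by simp
  also have "\<dots> \<le> A z0" unfolding A_def by (rule member_le_sum) auto
  finally have "0 < A z0 powr (1 / (1 - s))" by simp
  also have "\<dots> \<le> S" unfolding S_def by (rule member_le_sum) auto
  finally have "0 < S" .
  have exponent: "1 + s / (1 - s) = 1 / (1 - s)" using s by (simp add: field_simps)
  have "(\<Sum>p\<in>{p. P p \<noteq> 0}. P p powr (1 - s) * tilted_Z s P (snd p) powr s)
      = (\<Sum>z\<in>UNIV. \<Sum>x\<in>UNIV. P (x, z) powr (1 - s) * tilted_Z s P z powr s)"
    using s by (intro sum_support_powr_eq) simp
  also have "\<dots> = (\<Sum>z\<in>UNIV. A z * (A z powr (1 / (1 - s)) / S) powr s)"
    unfolding A_def S_def tilted_Z_def by (simp add: sum_distrib_right)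
  also have "\<dots> = (\<Sum>z\<in>UNIV. A z powr (1 / (1 - s)) / S powr s)"
    using A \<open>0 < S\<close>
    by (intro sum.cong refl) (simp add: powr_divide powr_powr powr_mult_base exponent)
  also have "\<dots> = S powr (1 - s)"
    unfolding S_def[symmetric] sum_divide_distrib[symmetric] using \<open>0 < S\<close> by (simp add: powr_diff)
  finally show ?thesis
    unfolding H_up_def cond_renyi_def A_def[symmetric] S_def[symmetric] using s \<open>0 < S\<close> by (simp add: powr_def)
qed

lemma exp_add_divide_powr:
  fixes a b N s t :: real
  assumes "0 < N" "0 < s"
  shows "(exp (a + b) / N) powr t = (exp (s * a) * exp (s * b)) powr (t / s) / N powr t"
  using assms by (simp add: powr_divide exp_powr_real mult_exp_exp field_simps)

lemma Pjs_cond_add_channel_le_H_down: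
  fixes P :: "'x::{finite, ab_group_add} \<times> 'z::finite \<Rightarrow> real" and PM :: "'m::finite \<Rightarrow> real"
  assumes P: "is_dist P" and PM: "is_dist PM" and s: "0 < s" "s < 1"
  shows "Pjs PM (cond_add_channel P) \<le> (exp (renyi_ent s PM + H_down s P) / CARD('x)) powr s"
proof -
  have "Pjs PM (cond_add_channel P) \<le> (\<Sum>m\<in>UNIV. PM m powr (1 - 1 * s)) * (\<Sum>m\<in>UNIV. PM m powr 1) powr s
     * (\<Sum>z\<in>UNIV. \<Sum>x\<in>UNIV. P (x, z) powr (1 - 1 * s) * (\<Sum>x'\<in>UNIV. P (x', z) powr 1) powr s)
     / CARD('x) powr s"
    using is_dist_nonneg[OF P] is_dist_nonneg[OF PM] s by (intro Pjs_cond_add_channel_le) auto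
  also have "\<dots> = exp (s * renyi_ent s PM) * exp (s * H_down s P) / CARD('x) powr s"
    using is_dist_nonneg[OF P] is_dist_nonneg[OF PM] is_dist_sum[OF PM] P PM s
    by (simp add: exp_mult_renyi_ent exp_mult_H_down marg_Z_def)
  also have "\<dots> = (exp (renyi_ent s PM + H_down s P) / CARD('x)) powr s"
    using s by (simp add: exp_add_divide_powr[of _ s])
  finally show ?thesis .
qed

lemma Pjs_cond_add_channel_le_H_up:
  fixes P :: "'x::{finite, ab_group_add} \<times> 'z::finite \<Rightarrow> real" and PM :: "'m::finite \<Rightarrow> real"
  assumes P: "is_dist P" and PM: "is_dist PM" and s: "0 < s" "s \<le> 1/2"
  shows "Pjs PM (cond_add_channel P) \<le> (exp (renyi_ent s PM + H_up s P) / CARD('x)) powr (s / (1 - s))"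
proof -
  define t where "t = s / (1 - s)"
  define R where "R = (\<Sum>m\<in>UNIV. PM m powr (1 - s))"
  define A where "A z = (\<Sum>x\<in>UNIV. P (x, z) powr (1 - s))" for z
  define S where "S = (\<Sum>z\<in>UNIV. A z powr (1 / (1 - s)))"
  have t: "0 < t" "t \<le> 1" "1 - (1 - s) * t = 1 - s" "1 + t = 1 / (1 - s)" "t / s = 1 / (1 - s)"
    unfolding t_def using s by (auto simp: field_simps)
  have "0 \<le> R" "0 \<le> S" "0 \<le> A z" for z
    unfolding R_def S_def A_def by (simp_all add: sum_nonneg)
  have "Pjs PM (cond_add_channel P)
      \<le> (\<Sum>m\<in>UNIV. PM m powr (1 - (1 - s) * t)) * (\<Sum>m\<in>UNIV. PM m powr (1 - s)) powr t
       * (\<Sum>z\<in>UNIV. \<Sum>x\<in>UNIV. P (x, z) powr (1 - (1 - s) * t) * (\<Sum>x'\<in>UNIV. P (x', z) powr (1 - s)) powr t)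
       / CARD('x) powr t"
    using is_dist_nonneg[OF P] is_dist_nonneg[OF PM] s t by (intro Pjs_cond_add_channel_le) auto
  also have "\<dots> = R * R powr t * (\<Sum>z\<in>UNIV. A z * A z powr t) / CARD('x) powr t"
    unfolding t(3) R_def A_def by (simp add: sum_distrib_right)
  also have "\<dots> = R powr (1 / (1 - s)) * S / CARD('x) powr t"
    unfolding S_def using \<open>0 \<le> R\<close> \<open>0 \<le> A _\<close> by (simp add: powr_mult_base t(4))
  also have "\<dots> = (exp (s * renyi_ent s PM) * exp (s * H_up s P)) powr (t / s) / CARD('x) powr t"
    using \<open>0 \<le> R\<close> \<open>0 \<le> S\<close> s P PM
    by (simp add: exp_mult_renyi_ent exp_mult_H_up R_def[symmetric] A_def[symmetric] S_def[symmetric]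
        powr_mult powr_powr t(5))
  also have "\<dots> = (exp (renyi_ent s PM + H_up s P) / CARD('x)) powr t"
    using s by (simp add: exp_add_divide_powr[of _ s])
  finally show ?thesis unfolding t_def .
qed

theorem mainTheorem5:
  fixes P :: "('x::{finite, ab_group_add} \<times> 'z::finite) \<Rightarrow> real"
    and PM :: "'m::finite \<Rightarrow> real"
  assumes "is_dist P" and "is_dist PM"
  shows "(\<forall>s::real. 0 < s \<and> s < 1 \<longrightarrow>
           Pjs PM (cond_add_channel P)
             \<le> (exp (renyi_ent s PM + H_down s P) / real (card (UNIV :: 'x set))) powr s)
       \<and> (\<forall>s::real. 0 < s \<and> s \<le> 1/2 \<longrightarrow>
           Pjs PM (cond_add_channel P)
             \<le> (exp (renyi_ent s PM + H_up s P) / real (card (UNIV :: 'x set))) powr (s / (1 - s)))"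
  using Pjs_cond_add_channel_le_H_down[OF assms] Pjs_cond_add_channel_le_H_up[OF assms] by blast

end
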